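(* Let $m\geqslant3$, $\alpha=2\uparrow\uparrow(m-1)$, and let $n$ be a natural number with $n<3^\alpha$. Then $H(n)=m$ if and only if $n=2^\alpha a$ with $a$ odd and $a<1.5^\alpha$. Moreover, if $n$ is not of the form $2^\alpha a$ with $a$ odd, then $H(n)\leqslant m-1$.
   Context: $H(n)$ is the height of the factorization tree of $n\geqslant1$: $H(1)=0$ and, for $n=p_1^{\alpha_1}\cdots p_k^{\alpha_k}>1$ with distinct primes $p_i$, $H(n)=1+\max_i H(\alpha_i)$. Tetration: $a\uparrow\uparrow0=1$, $a\uparrow\uparrow b=a^{a\uparrow\uparrow(b-1)}$. *)

theory Defs
  imports "HOL-Computational_Algebra.Primes" Complex_Main
begin

fun tet :: "nat \<Rightarrow> nat \<Rightarrow> nat" where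
  "tet a 0 = 1"
| "tet a (Suc b) = a ^ (tet a b)"

lemma multiplicity_less_self:
  assumes "prime (p::nat)" "n > 1"
  shows "multiplicity p n < n"
proof -
  have "p ^ multiplicity p n dvd n" by (rule multiplicity_dvd)
  hence "p ^ multiplicity p n \<le> n" using assms(2) by (intro dvd_imp_le) auto
  moreover have "multiplicity p n < 2 ^ multiplicity p n" by (rule less_exp)
  moreover have "2 ^ multiplicity p n \<le> p ^ multiplicity p n"
    using prime_ge_2_nat[OF assms(1)] by (intro power_mono) auto
  ultimately show ?thesis by linarith
qed

text \<open>Height of the factorization tree.\<close>
function H :: "nat \<Rightarrow> nat" where
  "H n = (if n \<le> 1 then 0
          else 1 + Max ((\<lambda>p. H (multiplicity p n)) ` prime_factors n))"
  by auto
termination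
  by (relation "measure id") (auto intro: multiplicity_less_self)

declare H.simps[simp del]

end

theory Submission
  imports Defs
begin

text \<open>
  Heights grow like tetration: if \<open>H n > k\<close>, some prime \<open>p\<close> divides \<open>n\<close> with multiplicity
  at least \<open>2\<up>\<up>k\<close>, so \<open>n \<ge> 2\<up>\<up>(k+1)\<close>. Hence \<open>n < 3^\<alpha> < 2\<up>\<up>(m+1)\<close> forces \<open>H n \<le> m\<close>.
  If \<open>H n = m\<close>, there is a prime \<open>p\<close> with \<open>v = v\<^sub>p(n) \<ge> \<alpha>\<close> and \<open>H v \<ge> m - 1\<close>; then
  \<open>p\<^sup>\<alpha> \<le> n < 3^\<alpha>\<close> gives \<open>p = 2\<close>, and \<open>2^v \<le> n < 4^\<alpha>\<close> gives \<open>v < 2\<alpha>\<close>. Repeating the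
  argument one level down, \<open>v\<close> is divisible by \<open>2^\<beta> = \<alpha>\<close> with \<open>\<beta> = 2\<up>\<up>(m-2)\<close>, so \<open>v = \<alpha>\<close>.
  Conversely \<open>v\<^sub>2(n) = \<alpha>\<close> gives \<open>H n \<ge> 1 + H \<alpha> = m\<close>. The bound \<open>a < 1.5^\<alpha>\<close> is just
  \<open>n < 3^\<alpha>\<close> again.
\<close>

lemma H_eq_0 [simp]: "n \<le> 1 \<Longrightarrow> H n = 0"
  by (subst H.simps) simp

lemma Suc_H_multiplicity_le:
  assumes "p \<in> prime_factors n"
  shows "Suc (H (multiplicity p n)) \<le> H n"
proof -
  have "n > 1"
    using assms prime_gt_1_nat[of p] dvd_imp_le[of p n] by (auto simp: in_prime_factors_iff)
  moreover have "H (multiplicity p n) \<le> Max ((\<lambda>q. H (multiplicity q n)) ` prime_factors n)"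
    using assms by (intro Max_ge) auto
  ultimately show ?thesis
    by (subst H.simps) simp
qed

lemma Suc_H_le_H_prime_power_mult:
  fixes a :: nat
  assumes "prime p" "\<not> p dvd a" "0 < e"
  shows "Suc (H e) \<le> H (p ^ e * a)"
proof -
  have "multiplicity p (p ^ e * a) = e"
    using assms by (intro multiplicity_decomposeI) auto
  moreover have "p \<in> prime_factors (p ^ e * a)"
    using assms by (auto simp: in_prime_factors_iff intro: gr0I)
  ultimately show ?thesis
    using Suc_H_multiplicity_le[of p "p ^ e * a"] by simp
qed

lemma exists_prime_factor_le_H_multiplicity:
  assumes "Suc k \<le> H n"
  shows "\<exists>p\<in>prime_factors n. k \<le> H (multiplicity p n)"
proof -
  have "n > 1"
    using assms by (cases "n \<le> 1") auto
  then obtain p where "prime p" "p dvd n"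
    using prime_factor_nat[of n] by auto
  then have "p \<in> prime_factors n"
    using \<open>n > 1\<close> by (simp add: in_prime_factors_iff)
  moreover have "k \<le> Max ((\<lambda>p. H (multiplicity p n)) ` prime_factors n)"
    using assms \<open>n > 1\<close> by (subst (asm) H.simps) simp
  ultimately show ?thesis
    by (subst (asm) Max_ge_iff) blast+
qed

lemma prime_power_le_if_le_multiplicity:
  assumes "p \<in> prime_factors (n::nat)" "e \<le> multiplicity p n"
  shows "p ^ e \<le> n"
  using dvd_imp_le[OF multiplicity_dvd'[OF assms(2)]] assms(1) by (auto simp: in_prime_factors_iff)

lemma two_power_le_if_le_multiplicity:
  assumes "p \<in> prime_factors (n::nat)" "e \<le> multiplicity p n"
  shows "2 ^ e \<le> n"
proof -
  have "(2::nat) ^ e \<le> p ^ e"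
    using assms(1) prime_ge_2_nat by (intro power_mono) auto
  also have "\<dots> \<le> n"
    using assms by (rule prime_power_le_if_le_multiplicity)
  finally show ?thesis .
qed

lemma prime_factor_eq_two_if_less_three_power:
  assumes "p \<in> prime_factors (n::nat)" "e \<le> multiplicity p n" "n < 3 ^ e"
  shows "p = 2"
proof -
  have "p ^ e < 3 ^ e"
    using prime_power_le_if_le_multiplicity[OF assms(1,2)] assms(3) by linarith
  then have "p < 3"
    by (rule power_less_imp_less_base) simp
  moreover have "prime p"
    using assms(1) by auto
  ultimately show ?thesis
    using prime_ge_2_nat[of p] by linarith
qed

lemma tet_pos: "0 < tet 2 k"
  by (cases k) auto

lemma two_le_tet:
  assumes "0 < k"
  shows "2 \<le> tet 2 k"
proof -
  obtain j where "k = Suc j"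
    using assms gr0_implies_Suc by blast
  have "(2::nat) ^ 1 \<le> 2 ^ tet 2 j"
    using tet_pos[of j] by (intro power_increasing) auto
  then show ?thesis
    using \<open>k = Suc j\<close> by simp
qed

lemma two_mul_le_two_power: "1 \<le> a \<Longrightarrow> 2 * a \<le> (2::nat) ^ a"
  by (induction a rule: nat_induct_at_least) auto

lemma two_mul_two_power_less_three_power: "2 \<le> b \<Longrightarrow> 2 * 2 ^ b < (3::nat) ^ b"
  by (induction b rule: nat_induct_at_least) auto

lemma three_power_tet_less_tet: "3 ^ tet 2 k < tet 2 (Suc (Suc k))"
proof -
  have "(3::nat) ^ tet 2 k < 4 ^ tet 2 k"
    using tet_pos[of k] by (intro power_strict_mono) auto
  also have "\<dots> = 2 ^ (2 * tet 2 k)"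
    by (simp add: power_mult)
  also have "\<dots> \<le> 2 ^ 2 ^ tet 2 k"
    using tet_pos[of k] two_mul_le_two_power by (intro power_increasing) auto
  finally show ?thesis
    by simp
qed

lemma exists_prime_factor_tet_le_multiplicity:
  assumes "Suc k \<le> H n"
  shows "\<exists>p\<in>prime_factors n. tet 2 k \<le> multiplicity p n \<and> k \<le> H (multiplicity p n)"
  using assms
proof (induction k arbitrary: n)
  case 0
  then obtain p where "p \<in> prime_factors n"
    using exists_prime_factor_le_H_multiplicity by blast
  then show ?case
    by (auto simp: in_prime_factors_iff prime_multiplicity_gt_zero_iff Suc_le_eq)
next
  case (Suc k)
  then obtain p where p: "p \<in> prime_factors n" and H_v: "Suc k \<le> H (multiplicity p n)"
    using exists_prime_factor_le_H_multiplicity by blast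
  then obtain q where "q \<in> prime_factors (multiplicity p n)"
    and "tet 2 k \<le> multiplicity q (multiplicity p n)"
    using Suc.IH by blast
  then have "tet 2 (Suc k) \<le> multiplicity p n"
    by (simp add: two_power_le_if_le_multiplicity)
  with p H_v show ?case
    by blast
qed

lemma tet_le_if_le_H:
  assumes "Suc k \<le> H n"
  shows "tet 2 (Suc k) \<le> n"
  using exists_prime_factor_tet_le_multiplicity[OF assms]
  by (auto dest: two_power_le_if_le_multiplicity)

lemma H_tet_ge: "k \<le> H (tet 2 k)"
proof (induction k)
  case (Suc k)
  then show ?case
    using Suc_H_le_H_prime_power_mult[of 2 1 "tet 2 k"] tet_pos[of k] by simp
qed simp

lemma H_le_if_less_three_power_tet:
  assumes "n < 3 ^ tet 2 k"
  shows "H n \<le> Suc k"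
proof (rule ccontr)
  assume "\<not> H n \<le> Suc k"
  then have "tet 2 (Suc (Suc k)) \<le> n"
    by (intro tet_le_if_le_H) simp
  with assms three_power_tet_less_tet[of k] show False
    by simp
qed

lemma eq_tet_if_le_H_less_double:
  assumes "1 \<le> k" "Suc k \<le> H v" "v < 2 * tet 2 (Suc k)"
  shows "v = tet 2 (Suc k)"
proof -
  define \<beta> where "\<beta> = tet 2 k"
  have tet_Suc: "tet 2 (Suc k) = 2 ^ \<beta>"
    by (simp add: \<beta>_def)
  obtain q where q: "q \<in> prime_factors v" and \<beta>_le: "\<beta> \<le> multiplicity q v"
    using exists_prime_factor_tet_le_multiplicity[OF assms(2)] \<beta>_def by blast
  have "\<beta> \<ge> 2"
    using assms(1) two_le_tet by (simp add: \<beta>_def)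
  have "v < 2 * 2 ^ \<beta>"
    using assms(3) tet_Suc by simp
  also have "\<dots> < 3 ^ \<beta>"
    using \<open>\<beta> \<ge> 2\<close> by (rule two_mul_two_power_less_three_power)
  finally have "q = 2"
    by (rule prime_factor_eq_two_if_less_three_power[OF q \<beta>_le])
  then have "2 ^ \<beta> dvd v"
    using multiplicity_dvd'[OF \<beta>_le] by simp
  then obtain c where v: "v = 2 ^ \<beta> * c" ..
  have "c \<noteq> 0"
    using q v by (auto simp: in_prime_factors_iff)
  moreover have "c < 2"
    using \<open>v < 2 * 2 ^ \<beta>\<close> v by simp
  ultimately have "c = 1"
    by linarith
  then show ?thesis
    using v tet_Suc by simp
qed

lemma multiplicity_two_eq_tet_if_le_H:
  assumes "1 \<le> k" "n < 3 ^ tet 2 (Suc k)" "Suc (Suc k) \<le> H n"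
  shows "multiplicity 2 n = tet 2 (Suc k)"
proof -
  define \<alpha> where "\<alpha> = tet 2 (Suc k)"
  obtain p where p: "p \<in> prime_factors n" and \<alpha>_le: "\<alpha> \<le> multiplicity p n"
    and H_v: "Suc k \<le> H (multiplicity p n)"
    using exists_prime_factor_tet_le_multiplicity[OF assms(3)] \<alpha>_def by blast
  have "p = 2"
    using p \<alpha>_le assms(2) \<alpha>_def by (intro prime_factor_eq_two_if_less_three_power) auto
  have "(2::nat) ^ multiplicity 2 n < 3 ^ \<alpha>"
    using prime_power_le_if_le_multiplicity[OF p order.refl] assms(2) \<open>p = 2\<close> \<alpha>_def by simp
  also have "\<dots> < 4 ^ \<alpha>"
    using tet_pos \<alpha>_def by (intro power_strict_mono) auto
  also have "\<dots> = 2 ^ (2 * \<alpha>)"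
    by (simp add: power_mult)
  finally have "multiplicity 2 n < 2 * \<alpha>"
    by simp
  then show ?thesis
    using eq_tet_if_le_H_less_double[OF assms(1)] H_v \<open>p = 2\<close> \<alpha>_def by simp
qed

lemma real_less_three_halves_power:
  assumes "2 ^ e * a < (3::nat) ^ e"
  shows "real a < (3 / 2) ^ e"
proof -
  have "real (2 ^ e * a) < real (3 ^ e)"
    using assms by (simp only: of_nat_less_iff)
  then have "2 ^ e * real a < 3 ^ e"
    by simp
  then show ?thesis
    by (simp add: field_simps)
qed

theorem lemma3:
  fixes m n :: nat
  assumes "m \<ge> 3"
  assumes "n < 3 ^ tet 2 (m - 1)"
  shows "(H n = m \<longleftrightarrow>
           (\<exists>a. n = 2 ^ tet 2 (m - 1) * a \<and> odd a \<and> real a < (3/2) ^ tet 2 (m - 1)))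
       \<and> ((\<not> (\<exists>a. n = 2 ^ tet 2 (m - 1) * a \<and> odd a)) \<longrightarrow> H n \<le> m - 1)"
proof -
  define \<alpha> where "\<alpha> = tet 2 (m - 1)"
  obtain k where m: "m = Suc (Suc k)" and "1 \<le> k"
    using assms(1) by (intro that[of "m - 2"]) auto
  have H_le: "H n \<le> m"
    using H_le_if_less_three_power_tet assms(2) m by simp
  have H_eq_iff: "H n = m \<longleftrightarrow> (\<exists>a. n = 2 ^ \<alpha> * a \<and> odd a)"
  proof
    assume "H n = m"
    then have "n \<noteq> 0" and "multiplicity 2 n = \<alpha>"
      using multiplicity_two_eq_tet_if_le_H[OF \<open>1 \<le> k\<close>] assms(2) m \<alpha>_def
      by (auto intro: gr0I)
    obtain a where "n = 2 ^ multiplicity 2 n * a" "\<not> 2 dvd a"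
      using \<open>n \<noteq> 0\<close> by (rule multiplicity_decompose'[of n 2]) auto
    with \<open>multiplicity 2 n = \<alpha>\<close> show "\<exists>a. n = 2 ^ \<alpha> * a \<and> odd a"
      by auto
  next
    assume "\<exists>a. n = 2 ^ \<alpha> * a \<and> odd a"
    then have "Suc (H \<alpha>) \<le> H n"
      using Suc_H_le_H_prime_power_mult[of 2 _ \<alpha>] tet_pos \<alpha>_def by auto
    with H_tet_ge[of "m - 1"] H_le show "H n = m"
      using \<alpha>_def m by simp
  qed
  have "real a < (3 / 2) ^ \<alpha>" if "n = 2 ^ \<alpha> * a" for a
    using real_less_three_halves_power assms(2) that \<alpha>_def by simp
  then show ?thesis
    using H_eq_iff H_le m unfolding \<alpha>_def by auto
qed

end
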